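(* Let $\hat K$ be the triangle with vertices $(0,0),(1,0),(0,1)$, $\hat b=\hat x_1\hat x_2(1-\hat x_1-\hat x_2)$, and $j\ge1$. If $\hat\tau=\hat b\,p$ with $p\in P_j^{hom}(\hat K;\mathbb{S})$ and $\widehat{\mathrm{div}}\,\hat\tau=0$ on $\hat K$, then $\hat\tau=0$.
   Context: $\mathbb{S}$ is the space of real symmetric $2\times2$ matrices; $P_j^{hom}(\hat K;\mathbb{S})$ denotes $\mathbb{S}$-valued polynomials that are homogeneous of degree $j$ in $(\hat x_1,\hat x_2)$; the divergence of a matrix field is taken row-wise. *)

theory Defs
  imports "HOL-Analysis.Analysis"
begin

definition ref_triangle :: "(real \<times> real) set" where
  "ref_triangle = convex hull {(0,0), (1,0), (0,1)}"

definition bubble :: "real \<Rightarrow> real \<Rightarrow> real" where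
  "bubble x1 x2 = x1 * x2 * (1 - x1 - x2)"

definition hom_polys :: "nat \<Rightarrow> (real \<Rightarrow> real \<Rightarrow> real) set" where
  "hom_polys j = {f. \<exists>c :: nat \<Rightarrow> real. \<forall>x1 x2. f x1 x2 = (\<Sum>k\<le>j. c k * x1 ^ k * x2 ^ (j - k))}"

definition hom_sym_polys :: "nat \<Rightarrow> (real \<Rightarrow> real \<Rightarrow> real^2^2) set" where
  "hom_sym_polys j = {p. (\<forall>x1 x2. transpose (p x1 x2) = p x1 x2) \<and>
       (\<forall>i k. (\<lambda>x1 x2. p x1 x2 $ i $ k) \<in> hom_polys j)}"

definition partial1 :: "(real \<Rightarrow> real \<Rightarrow> real) \<Rightarrow> real \<Rightarrow> real \<Rightarrow> real" where
  "partial1 f x1 x2 = deriv (\<lambda>t. f t x2) x1"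
definition partial2 :: "(real \<Rightarrow> real \<Rightarrow> real) \<Rightarrow> real \<Rightarrow> real \<Rightarrow> real" where
  "partial2 f x1 x2 = deriv (\<lambda>t. f x1 t) x2"

definition mdiv :: "(real \<Rightarrow> real \<Rightarrow> real^2^2) \<Rightarrow> real \<Rightarrow> real \<Rightarrow> real^2" where
  "mdiv \<tau> x1 x2 = (\<chi> i. partial1 (\<lambda>a b. \<tau> a b $ i $ 1) x1 x2 + partial2 (\<lambda>a b. \<tau> a b $ i $ 2) x1 x2)"

end

theory Submission
  imports Defs "HOL-Computational_Algebra.Polynomial"
begin

text \<open>
  Write a row of \<open>p\<close> as \<open>(A, B)\<close> and the bubble as \<open>b = q - q s\<close> with \<open>q = x y\<close>, \<open>s = x + y\<close>.
  Then \<open>div (b A, b B) = div (q A, q B) - s div (q A, q B) - q (A + B)\<close>, a sum of two homogeneous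
  parts of degrees \<open>j + 1\<close> and \<open>j + 2\<close>. Scaling the triangle along rays separates them, so both
  vanish on the hypotenuse \<open>x + y = 1\<close>; in particular \<open>A + B = 0\<close>. For the first row
  \<open>B = -A\<close>, and then \<open>div (q A, - q A)\<close> restricted to the hypotenuse is the derivative of
  \<open>x (1 - x) A(x, 1 - x)\<close>, which therefore vanishes identically, so \<open>A = 0\<close>. Hence
  \<open>p\<^sub>1\<^sub>1 = p\<^sub>1\<^sub>2 = 0\<close>, and the second row gives \<open>p\<^sub>2\<^sub>2 = -p\<^sub>1\<^sub>2 = 0\<close>.
\<close>

definition hom_poly :: "(nat \<Rightarrow> real) \<Rightarrow> nat \<Rightarrow> real \<Rightarrow> real \<Rightarrow> real" where
  "hom_poly c j x y = (\<Sum>k\<le>j. c k * x ^ k * y ^ (j - k))"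

definition hom_poly_dx :: "(nat \<Rightarrow> real) \<Rightarrow> nat \<Rightarrow> real \<Rightarrow> real \<Rightarrow> real" where
  "hom_poly_dx c j x y = (\<Sum>k\<le>j. c k * (of_nat k * x ^ (k - 1)) * y ^ (j - k))"

definition hom_poly_dy :: "(nat \<Rightarrow> real) \<Rightarrow> nat \<Rightarrow> real \<Rightarrow> real \<Rightarrow> real" where
  "hom_poly_dy c j x y = (\<Sum>k\<le>j. c k * x ^ k * (of_nat (j - k) * y ^ (j - k - 1)))"

lemma hom_polys_iff: "f \<in> hom_polys j \<longleftrightarrow> (\<exists>c. f = hom_poly c j)"
  unfolding hom_polys_def hom_poly_def by (auto intro!: ext)

lemma hom_poly_has_derivative_x:
  "((\<lambda>t. hom_poly c j t y) has_real_derivative hom_poly_dx c j x y) (at x)"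
  unfolding hom_poly_def hom_poly_dx_def
  by (auto intro!: derivative_eq_intros sum.cong simp: mult_ac)

lemma hom_poly_has_derivative_y:
  "((\<lambda>t. hom_poly c j x t) has_real_derivative hom_poly_dy c j x y) (at y)"
  unfolding hom_poly_def hom_poly_dy_def
  by (auto intro!: derivative_eq_intros sum.cong simp: mult_ac)

lemma hom_poly_has_derivative_antidiagonal:
  "((\<lambda>t. hom_poly c j t (s - t)) has_real_derivative
      hom_poly_dx c j x (s - x) - hom_poly_dy c j x (s - x)) (at x)"
  unfolding hom_poly_def hom_poly_dx_def hom_poly_dy_def
  by (auto intro!: derivative_eq_intros simp: sum_subtractf[symmetric] algebra_simps)

lemma hom_poly_scale: "hom_poly c j (t * x) (t * y) = t ^ j * hom_poly c j x y"
  unfolding hom_poly_def sum_distrib_left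
proof (rule sum.cong)
  fix k assume "k \<in> {..j}"
  then have "t ^ j = t ^ k * t ^ (j - k)" by (simp add: power_add[symmetric])
  then show "c k * (t * x) ^ k * (t * y) ^ (j - k) = t ^ j * (c k * x ^ k * y ^ (j - k))"
    by (simp add: power_mult_distrib)
qed simp

lemma hom_poly_dx_scale:
  "hom_poly_dx c (Suc m) (t * x) (t * y) = t ^ m * hom_poly_dx c (Suc m) x y"
  unfolding hom_poly_dx_def sum_distrib_left
proof (rule sum.cong)
  fix k assume k: "k \<in> {..Suc m}"
  show "c k * (of_nat k * (t * x) ^ (k - 1)) * (t * y) ^ (Suc m - k) =
        t ^ m * (c k * (of_nat k * x ^ (k - 1)) * y ^ (Suc m - k))"
  proof (cases k)
    case (Suc i)
    with k have "t ^ m = t ^ i * t ^ (Suc m - k)" by (simp add: power_add[symmetric])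
    then show ?thesis using Suc by (simp add: power_mult_distrib)
  qed simp
qed simp

lemma hom_poly_dy_scale:
  "hom_poly_dy c (Suc m) (t * x) (t * y) = t ^ m * hom_poly_dy c (Suc m) x y"
  unfolding hom_poly_dy_def sum_distrib_left
proof (rule sum.cong)
  fix k assume k: "k \<in> {..Suc m}"
  show "c k * (t * x) ^ k * (of_nat (Suc m - k) * (t * y) ^ (Suc m - k - 1)) =
        t ^ m * (c k * x ^ k * (of_nat (Suc m - k) * y ^ (Suc m - k - 1)))"
  proof (cases "k = Suc m")
    case False
    with k have "t ^ m = t ^ k * t ^ (Suc m - k - 1)" by (simp add: power_add[symmetric])
    then show ?thesis by (simp add: power_mult_distrib)
  qed simp
qed simp

lemma hom_poly_add: "hom_poly c j x y + hom_poly d j x y = hom_poly (\<lambda>k. c k + d k) j x y"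
  unfolding hom_poly_def by (simp add: sum.distrib algebra_simps)

lemma hom_poly_eq_zero: "(\<And>k. k \<le> j \<Longrightarrow> c k = 0) \<Longrightarrow> hom_poly c j x y = 0"
  unfolding hom_poly_def by simp

lemma hom_poly_coeffs_eq_zero_on_ray:
  assumes "\<And>x. x > 0 \<Longrightarrow> hom_poly c j x 1 = 0" and "k \<le> j"
  shows "c k = 0"
proof -
  define q where "q = (\<Sum>i\<le>j. monom (c i) i)"
  have poly_q: "poly q x = hom_poly c j x 1" for x
    unfolding q_def hom_poly_def by (simp add: poly_sum poly_monom)
  have "q = 0"
  proof (rule ccontr)
    assume "q \<noteq> 0"
    then have "finite {x. poly q x = 0}" by (rule poly_roots_finite)
    moreover have "{0<..} \<subseteq> {x. poly q x = 0}" using assms(1) poly_q by auto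
    ultimately show False using finite_subset infinite_Ioi by blast
  qed
  moreover have "coeff q k = c k"
    unfolding q_def using assms(2) by (simp add: coeff_sum coeff_monom)
  ultimately show ?thesis by simp
qed

lemma hom_poly_coeffs_eq_zero_on_antidiagonal:
  assumes "\<And>x. 0 < x \<Longrightarrow> x < 1 \<Longrightarrow> hom_poly c j x (1 - x) = 0" and "k \<le> j"
  shows "c k = 0"
proof (rule hom_poly_coeffs_eq_zero_on_ray[OF _ \<open>k \<le> j\<close>])
  fix z :: real assume "z > 0"
  define x where "x = z / (1 + z)"
  have "0 < x" "x < 1" "(1 + z) * x = z" "(1 + z) * (1 - x) = 1"
    using \<open>z > 0\<close> unfolding x_def by (auto simp: field_simps)
  then show "hom_poly c j z 1 = 0"
    using assms(1) hom_poly_scale[of c j "1 + z" x "1 - x"] by simp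
qed

lemma scaled_antidiagonal_in_ref_triangle:
  assumes "0 \<le> x" "x \<le> 1" "0 \<le> t" "t \<le> 1"
  shows "(t * x, t * (1 - x)) \<in> ref_triangle"
proof -
  have "(t * x, t * (1 - x)) =
      (1 - t) *\<^sub>R (0::real, 0::real) + (t * x) *\<^sub>R (1, 0) + (t * (1 - x)) *\<^sub>R (0, 1)"
    by simp
  moreover have "0 \<le> t * x" "0 \<le> t * (1 - x)" "0 \<le> 1 - t"
    using assms by auto
  moreover have "(1 - t) + t * x + t * (1 - x) = 1"
    by (simp add: algebra_simps)
  ultimately show ?thesis unfolding ref_triangle_def convex_hull_3 by blast
qed

text \<open>\<open>bubble_div j c d\<close> is \<open>div (b A, b B)\<close> for \<open>A = hom_poly c j\<close>, \<open>B = hom_poly d j\<close>,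
  and \<open>quadratic_bubble_div\<close> is \<open>div (x y A, x y B)\<close>.\<close>

definition bubble_div :: "nat \<Rightarrow> (nat \<Rightarrow> real) \<Rightarrow> (nat \<Rightarrow> real) \<Rightarrow> real \<Rightarrow> real \<Rightarrow> real" where
  "bubble_div j c d x y =
     (y * (1 - x - y) - x * y) * hom_poly c j x y + bubble x y * hom_poly_dx c j x y
     + (x * (1 - x - y) - x * y) * hom_poly d j x y + bubble x y * hom_poly_dy d j x y"

definition quadratic_bubble_div ::
    "nat \<Rightarrow> (nat \<Rightarrow> real) \<Rightarrow> (nat \<Rightarrow> real) \<Rightarrow> real \<Rightarrow> real \<Rightarrow> real" where
  "quadratic_bubble_div j c d x y =
     y * hom_poly c j x y + x * y * hom_poly_dx c j x y
     + x * hom_poly d j x y + x * y * hom_poly_dy d j x y"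

lemma partial_bubble_row_eq_bubble_div:
  assumes "\<And>a b. F a b = bubble a b * hom_poly c j a b"
    and "\<And>a b. G a b = bubble a b * hom_poly d j a b"
  shows "partial1 F x y + partial2 G x y = bubble_div j c d x y"
proof -
  have "((\<lambda>t. bubble t y * hom_poly c j t y) has_real_derivative
      (y * (1 - x - y) - x * y) * hom_poly c j x y + bubble x y * hom_poly_dx c j x y) (at x)"
    unfolding bubble_def
    by (rule derivative_eq_intros hom_poly_has_derivative_x refl | simp add: algebra_simps)+
  moreover have "((\<lambda>t. bubble x t * hom_poly d j x t) has_real_derivative
      (x * (1 - x - y) - x * y) * hom_poly d j x y + bubble x y * hom_poly_dy d j x y) (at y)"
    unfolding bubble_def
    by (rule derivative_eq_intros hom_poly_has_derivative_y refl | simp add: algebra_simps)+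
  moreover have "F = (\<lambda>a b. bubble a b * hom_poly c j a b)" "G = (\<lambda>a b. bubble a b * hom_poly d j a b)"
    using assms by (auto intro!: ext)
  ultimately show ?thesis
    unfolding partial1_def partial2_def bubble_div_def by (simp add: DERIV_imp_deriv)
qed

lemma bubble_div_scale:
  "bubble_div (Suc m) c d (t * x) (t * y) =
     t * t * t ^ m * quadratic_bubble_div (Suc m) c d x y
     - t * t * t * t ^ m * ((x + y) * quadratic_bubble_div (Suc m) c d x y
                            + x * y * (hom_poly c (Suc m) x y + hom_poly d (Suc m) x y))"
proof -
  have "(t*y*(1-t*x-t*y) - t*x*(t*y)) * (t*T*A) + (t*x*(t*y)*(1-t*x-t*y)) * (T*A')
     + (t*x*(1-t*x-t*y) - t*x*(t*y)) * (t*T*B) + (t*x*(t*y)*(1-t*x-t*y)) * (T*B')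
   = t*t*T * (y*A + x*y*A' + x*B + x*y*B')
     - t*t*t*T * ((x+y)*(y*A + x*y*A' + x*B + x*y*B') + x*y*(A+B))" for T A A' B B' :: real
    by algebra
  then show ?thesis
    unfolding bubble_div_def quadratic_bubble_div_def bubble_def
      hom_poly_scale hom_poly_dx_scale hom_poly_dy_scale
    by simp
qed

lemma bubble_div_vanishes_imp_antidiagonal:
  assumes "\<And>x y. (x, y) \<in> ref_triangle \<Longrightarrow> bubble_div (Suc m) c d x y = 0"
    and "0 \<le> x" "x \<le> 1"
  shows "quadratic_bubble_div (Suc m) c d x (1 - x) = 0"
    and "x * (1 - x) * (hom_poly c (Suc m) x (1 - x) + hom_poly d (Suc m) x (1 - x)) = 0"
proof -
  define P where "P = quadratic_bubble_div (Suc m) c d x (1 - x)"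
  define R where "R = x * (1 - x) * (hom_poly c (Suc m) x (1 - x) + hom_poly d (Suc m) x (1 - x))"
  have ray: "t * t * t ^ m * P - t * t * t * t ^ m * (P + R) = 0" if "0 \<le> t" "t \<le> 1" for t
    using assms(1)[OF scaled_antidiagonal_in_ref_triangle[OF assms(2,3) that]]
      bubble_div_scale[of m c d t x "1 - x"]
    unfolding P_def R_def by simp
  have "P - (P + R) = 0" using ray[of 1] by simp
  moreover have "P - (1/2) * (P + R) = 0"
    using ray[of "1/2"] by (simp add: algebra_simps)
  ultimately have "P = 0" "R = 0" by auto
  then show "quadratic_bubble_div (Suc m) c d x (1 - x) = 0"
    and "x * (1 - x) * (hom_poly c (Suc m) x (1 - x) + hom_poly d (Suc m) x (1 - x)) = 0"
    unfolding P_def R_def by auto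
qed

lemma bubble_div_vanishes_imp_coeffs_sum_zero:
  assumes "\<And>x y. (x, y) \<in> ref_triangle \<Longrightarrow> bubble_div (Suc m) c d x y = 0"
    and "k \<le> Suc m"
  shows "c k + d k = 0"
proof (rule hom_poly_coeffs_eq_zero_on_antidiagonal[OF _ \<open>k \<le> Suc m\<close>])
  fix x :: real assume "0 < x" "x < 1"
  then show "hom_poly (\<lambda>k. c k + d k) (Suc m) x (1 - x) = 0"
    using bubble_div_vanishes_imp_antidiagonal(2)[OF assms(1), of x] by (simp add: hom_poly_add)
qed

text \<open>For \<open>B = -A\<close>, \<open>quadratic_bubble_div\<close> on the hypotenuse is the derivative of
  \<open>x (1 - x) A(x, 1 - x)\<close>, which vanishes at \<open>x = 0\<close>.\<close>

lemma quadratic_bubble_div_antisym_vanishes_imp_coeffs_zero: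
  assumes antisym: "\<And>k. k \<le> j \<Longrightarrow> c k + d k = 0"
    and vanishes: "\<And>x. 0 \<le> x \<Longrightarrow> x \<le> 1 \<Longrightarrow> quadratic_bubble_div j c d x (1 - x) = 0"
    and "k \<le> j"
  shows "c k = 0"
proof -
  define h where "h t = t * (1 - t) * hom_poly c j t (1 - t)" for t
  have "d k = - c k" if "k \<le> j" for k
    using antisym[OF that] by simp
  then have d_neg: "hom_poly d j x y = - hom_poly c j x y"
      "hom_poly_dy d j x y = - hom_poly_dy c j x y" for x y
    unfolding hom_poly_def hom_poly_dy_def sum_negf[symmetric] by (auto intro!: sum.cong)
  have h_deriv: "(h has_real_derivative quadratic_bubble_div j c d x (1 - x)) (at x)" for x
  proof -
    have "(h has_real_derivative (1 - x) * hom_poly c j x (1 - x) - x * hom_poly c j x (1 - x)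
        + x * (1 - x) * (hom_poly_dx c j x (1 - x) - hom_poly_dy c j x (1 - x))) (at x)"
      unfolding h_def
      by (rule derivative_eq_intros hom_poly_has_derivative_antidiagonal[of c j 1 x] refl
          | simp add: algebra_simps)+
    then show ?thesis
      unfolding quadratic_bubble_div_def d_neg by (simp add: algebra_simps)
  qed
  show ?thesis
  proof (rule hom_poly_coeffs_eq_zero_on_antidiagonal[OF _ \<open>k \<le> j\<close>])
    fix x :: real assume x: "0 < x" "x < 1"
    have "h x = h 0"
    proof (rule DERIV_isconst_end[OF \<open>0 < x\<close>])
      show "continuous_on {0..x} h"
        using h_deriv by (meson DERIV_continuous continuous_at_imp_continuous_on)
      fix y assume "0 < y" "y < x"
      then show "(h has_real_derivative 0) (at y)" using h_deriv[of y] vanishes[of y] x by simp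
    qed
    then show "hom_poly c j x (1 - x) = 0" using x unfolding h_def by simp
  qed
qed

theorem lemma4p5:
  fixes j :: nat and p \<tau> :: "real \<Rightarrow> real \<Rightarrow> real^2^2"
  assumes "j \<ge> 1"
    and "p \<in> hom_sym_polys j"
    and "\<And>x1 x2. \<tau> x1 x2 = bubble x1 x2 *\<^sub>R p x1 x2"
    and "\<And>x1 x2. (x1, x2) \<in> ref_triangle \<Longrightarrow> mdiv \<tau> x1 x2 = 0"
  shows "\<forall>x1 x2. \<tau> x1 x2 = 0"
proof -
  obtain m where j: "j = Suc m" using assms(1) by (cases j) auto
  have "\<forall>i k. \<exists>c. (\<lambda>x1 x2. p x1 x2 $ i $ k) = hom_poly c j"
    using assms(2) unfolding hom_sym_polys_def hom_polys_iff by blast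
  then obtain co where co: "\<And>i k. (\<lambda>x1 x2. p x1 x2 $ i $ k) = hom_poly (co i k) j"
    by metis
  have sym: "p x1 x2 $ 2 $ 1 = p x1 x2 $ 1 $ 2" for x1 x2
  proof -
    have "transpose (p x1 x2) $ 2 $ 1 = p x1 x2 $ 2 $ 1"
      using assms(2) unfolding hom_sym_polys_def by simp
    then show ?thesis unfolding transpose_def by simp
  qed
  have entry: "\<tau> a b $ i $ k = bubble a b * hom_poly (co i k) j a b" for a b i k
    using assms(3) co[of i k] by (simp add: fun_eq_iff)
  have row1: "bubble_div j (co 1 1) (co 1 2) x y = 0" if "(x, y) \<in> ref_triangle" for x y
  proof -
    have "mdiv \<tau> x y $ 1 = 0" using assms(4)[OF that] by simp
    then show ?thesis
      using partial_bubble_row_eq_bubble_div[of "\<lambda>a b. \<tau> a b $ 1 $ 1" "co 1 1" j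
          "\<lambda>a b. \<tau> a b $ 1 $ 2" "co 1 2" x y] entry
      unfolding mdiv_def by simp
  qed
  have row2: "bubble_div j (co 1 2) (co 2 2) x y = 0" if "(x, y) \<in> ref_triangle" for x y
  proof -
    have "mdiv \<tau> x y $ 2 = 0" using assms(4)[OF that] by simp
    moreover have "\<tau> a b $ 2 $ 1 = bubble a b * hom_poly (co 1 2) j a b" for a b
      using entry[of a b 2 1] entry[of a b 1 2] assms(3) sym by simp
    ultimately show ?thesis
      using partial_bubble_row_eq_bubble_div[of "\<lambda>a b. \<tau> a b $ 2 $ 1" "co 1 2" j
          "\<lambda>a b. \<tau> a b $ 2 $ 2" "co 2 2" x y] entry
      unfolding mdiv_def by simp
  qed
  have sum11: "co 1 1 k + co 1 2 k = 0" and sum22: "co 1 2 k + co 2 2 k = 0" if "k \<le> j" for k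
    using bubble_div_vanishes_imp_coeffs_sum_zero[of m, OF row1[unfolded j]]
      bubble_div_vanishes_imp_coeffs_sum_zero[of m, OF row2[unfolded j]] that unfolding j by auto
  have zero11: "co 1 1 k = 0" if "k \<le> j" for k
    using quadratic_bubble_div_antisym_vanishes_imp_coeffs_zero[of j "co 1 1" "co 1 2", OF sum11 _ that]
      bubble_div_vanishes_imp_antidiagonal(1)[of m, OF row1[unfolded j]] unfolding j by blast
  have zero12: "co 1 2 k = 0" and zero22: "co 2 2 k = 0" if "k \<le> j" for k
    using zero11[OF that] sum11[OF that] sum22[OF that] by auto
  have entry_p: "p x1 x2 $ i $ k = hom_poly (co i k) j x1 x2" for x1 x2 i k
    using fun_cong[OF fun_cong[OF co[of i k]]] by simp
  have "p x1 x2 = 0" for x1 x2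
    using entry_p[of x1 x2] sym[of x1 x2] hom_poly_eq_zero[OF zero11] hom_poly_eq_zero[OF zero12]
      hom_poly_eq_zero[OF zero22]
    by (simp add: vec_eq_iff forall_2)
  then show ?thesis using assms(3) by simp
qed

end
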